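(* With $\lambda=0$, the ordering $O(n^a,n^b)$ output by the xOrder procedure (defined in the context) maximizes $\mathrm{AUC}^o$ over all cross-group orderings $o$ of $(\mathrm{p}^a,\mathrm{p}^b)$; i.e., it is a global maximizer of $J(o)=\mathrm{AUC}^o-\lambda\Delta\mathrm{xAUC}^o$ for $\lambda=0$.
   Context: Setting: two disjoint finite groups $a,b$ of instances with labels $Y_u\in\{0,1\}$; $n^g,n^g_1,n^g_0$ denote the size, number of positives and number of negatives of group $g$ (all counts $\ge1$); $n_1=n_1^a+n_1^b$, $n_0=n_0^a+n_0^b$, $k_{a,b}=n_1^an_0^b$, $k_{b,a}=n_0^an_1^b$, $k=n_0n_1$. $\mathrm{p}^a=(\mathrm{p}^{a(1)},\dots,\mathrm{p}^{a(n^a)})$ and $\mathrm{p}^b=(\mathrm{p}^{b(1)},\dots,\mathrm{p}^{b(n^b)})$ are fixed orderings of the groups (e.g. by decreasing score). A cross-group ordering is a list of all instances of $a\cup b$ preserving the relative orders within $\mathrm{p}^a$ and within $\mathrm{p}^b$; "precedes" means ranked higher. $\mathrm{AUC}^o=\frac{1}{n_1n_0}\#\{(u,v):Y_u=1,Y_v=0,u\text{ precedes }v\text{ in }o\}$; $\mathrm{xAUC}^o(a,b)=\frac{1}{n_1^an_0^b}\#\{(u,v):u\in a,Y_u=1,v\in b,Y_v=0,u\text{ precedes }v\}$, $\mathrm{xAUC}^o(b,a)$ symmetrically; $\Delta\mathrm{xAUC}^o=|\mathrm{xAUC}^o(a,b)-\mathrm{xAUC}^o(b,a)|$. xOrder: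 For $0\le i\le n^a$, $0\le j\le n^b$ and a list $q$ that interleaves $\mathrm{p}^{a(1)},\dots,\mathrm{p}^{a(i)}$ and $\mathrm{p}^{b(1)},\dots,\mathrm{p}^{b(j)}$ preserving within-group orders, let $q^{\to b}$ be $q$ followed by $\mathrm{p}^{b(j+1)},\dots,\mathrm{p}^{b(n^b)}$ and $q^{\to a}$ be $q$ followed by $\mathrm{p}^{a(i+1)},\dots,\mathrm{p}^{a(n^a)}$. Define $A(q)=\frac{1}{n_1^an_0^b}\#\{(u,v): u\in\{\mathrm{p}^{a(1)},..,\mathrm{p}^{a(i)}\},Y_u=1,v\in b,Y_v=0,u\text{ precedes }v\text{ in }q^{\to b}\}$, $B(q)=\frac{1}{n_1^bn_0^a}\#\{(u,v): u\in\{\mathrm{p}^{b(1)},..,\mathrm{p}^{b(j)}\},Y_u=1,v\in a,Y_v=0,u\text{ precedes }v\text{ in }q^{\to a}\}$, and $\widehat G(q)=\frac{k_{a,b}}{k}A(q)+\frac{k_{b,a}}{k}B(q)-\lambda|A(q)-B(q)|$. Set $O(i,0)=(\mathrm{p}^{a(1)},\dots,\mathrm{p}^{a(i)})$ and $O(0,j)=(\mathrm{p}^{b(1)},\dots,\mathrm{p}^{b(j)})$. For $i=1,\dots,n^a$ and $j=1,\dots,n^b$ (in increasing order): if $\widehat G(O(i-1,j)\oplus\mathrm{p}^{a(i)})>\widehat G(O(i,j-1)\oplus\mathrm{p}^{b(j)})$ then $O(i,j)=O(i-1,j)\oplus\mathrm{p}^{a(i)}$, otherwise $O(i,j)=O(i,j-1)\oplus\mathrm{p}^{b(j)}$,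 where $\oplus$ appends an element to the end of a list. The output is $O(n^a,n^b)$, a cross-group ordering. *)

theory Defs
  imports Main "HOL.Real"
begin

text \<open>Instances have an abstract type 'a; the two groups are given by their fixed
orderings pa and pb (lists, highest rank first); labels by Y :: 'a => bool (True = positive).\<close>

definition precedes :: "'a list \<Rightarrow> 'a \<Rightarrow> 'a \<Rightarrow> bool" where
  "precedes ord u v \<longleftrightarrow> (\<exists>i j. i < j \<and> j < length ord \<and> ord ! i = u \<and> ord ! j = v)"

definition npos :: "('a \<Rightarrow> bool) \<Rightarrow> 'a list \<Rightarrow> nat" where
  "npos Y p = card {u \<in> set p. Y u}"

definition nneg :: "('a \<Rightarrow> bool) \<Rightarrow> 'a list \<Rightarrow> nat" where
  "nneg Y p = card {u \<in> set p. \<not> Y u}"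

definition cnt :: "('a \<Rightarrow> bool) \<Rightarrow> 'a set \<Rightarrow> 'a set \<Rightarrow> 'a list \<Rightarrow> nat" where
  "cnt Y S T ord = card {(u, v). u \<in> S \<and> Y u \<and> v \<in> T \<and> \<not> Y v \<and> precedes ord u v}"

definition AUC :: "('a \<Rightarrow> bool) \<Rightarrow> 'a list \<Rightarrow> 'a list \<Rightarrow> 'a list \<Rightarrow> real" where
  "AUC Y pa pb ord =
     real (cnt Y (set pa \<union> set pb) (set pa \<union> set pb) ord) /
     (real (npos Y pa + npos Y pb) * real (nneg Y pa + nneg Y pb))"

definition xAUC :: "('a \<Rightarrow> bool) \<Rightarrow> 'a list \<Rightarrow> 'a list \<Rightarrow> 'a list \<Rightarrow> real" where
  "xAUC Y pa pb ord = real (cnt Y (set pa) (set pb) ord) / (real (npos Y pa) * real (nneg Y pb))"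

definition DeltaxAUC :: "('a \<Rightarrow> bool) \<Rightarrow> 'a list \<Rightarrow> 'a list \<Rightarrow> 'a list \<Rightarrow> real" where
  "DeltaxAUC Y pa pb ord = \<bar>xAUC Y pa pb ord - xAUC Y pb pa ord\<bar>"

definition J :: "real \<Rightarrow> ('a \<Rightarrow> bool) \<Rightarrow> 'a list \<Rightarrow> 'a list \<Rightarrow> 'a list \<Rightarrow> real" where
  "J lam Y pa pb ord = AUC Y pa pb ord - lam * DeltaxAUC Y pa pb ord"

text \<open>A(q), B(q) for a partial list q interleaving the first i elements of pa and first j of pb.\<close>
definition Apart :: "('a \<Rightarrow> bool) \<Rightarrow> 'a list \<Rightarrow> 'a list \<Rightarrow> nat \<Rightarrow> nat \<Rightarrow> 'a list \<Rightarrow> real" where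
  "Apart Y pa pb i j q =
     real (cnt Y (set (take i pa)) (set pb) (q @ drop j pb)) / (real (npos Y pa) * real (nneg Y pb))"

definition Bpart :: "('a \<Rightarrow> bool) \<Rightarrow> 'a list \<Rightarrow> 'a list \<Rightarrow> nat \<Rightarrow> nat \<Rightarrow> 'a list \<Rightarrow> real" where
  "Bpart Y pa pb i j q =
     real (cnt Y (set (take j pb)) (set pa) (q @ drop i pa)) / (real (npos Y pb) * real (nneg Y pa))"

definition Ghat :: "real \<Rightarrow> ('a \<Rightarrow> bool) \<Rightarrow> 'a list \<Rightarrow> 'a list \<Rightarrow> nat \<Rightarrow> nat \<Rightarrow> 'a list \<Rightarrow> real" where
  "Ghat lam Y pa pb i j q =
     (let kab = real (npos Y pa * nneg Y pb);
          kba = real (nneg Y pa * npos Y pb);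
          k = real ((nneg Y pa + nneg Y pb) * (npos Y pa + npos Y pb));
          A = Apart Y pa pb i j q; B = Bpart Y pa pb i j q
      in kab / k * A + kba / k * B - lam * \<bar>A - B\<bar>)"

text \<open>xOrder table O(i,j); p^{a(i)} is pa ! (i - 1).\<close>
fun xO :: "real \<Rightarrow> ('a \<Rightarrow> bool) \<Rightarrow> 'a list \<Rightarrow> 'a list \<Rightarrow> nat \<Rightarrow> nat \<Rightarrow> 'a list" where
  "xO lam Y pa pb 0 j = take j pb"
| "xO lam Y pa pb (Suc i) 0 = take (Suc i) pa"
| "xO lam Y pa pb (Suc i) (Suc j) =
     (let qa = xO lam Y pa pb i (Suc j) @ [pa ! i];
          qb = xO lam Y pa pb (Suc i) j @ [pb ! j]
      in if Ghat lam Y pa pb (Suc i) (Suc j) qa > Ghat lam Y pa pb (Suc i) (Suc j) qb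
         then qa else qb)"

definition xOrder :: "real \<Rightarrow> ('a \<Rightarrow> bool) \<Rightarrow> 'a list \<Rightarrow> 'a list \<Rightarrow> 'a list" where
  "xOrder lam Y pa pb = xO lam Y pa pb (length pa) (length pb)"

end

theory Submission
  imports Defs
begin

text \<open>Let q interleave the first i elements of pa and the first j of pb. For lambda = 0,
k times Ghat q is the number of correctly ordered cross-group pairs inside q plus a term that
depends only on (i, j), since every positive already placed precedes every negative still to come.
So the greedy step compares cross-group counts. Appending an element raises that count by an amount
depending only on the set of elements already placed; hence an optimal interleaving of the prefixes
(i, j) extends an optimal one of (i - 1, j) or (i, j - 1), and xOrder is the exact dynamic program
for the maximal cross-group count. Within-group pairs are ordered alike in every interleaving, so
AUC, which is J for lambda = 0, increases with the cross-group count.\<close>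

lemma precedes_Nil [simp]: "\<not> precedes [] u v"
  by (simp add: precedes_def)

lemma precedes_Cons: "precedes (x # q) u v \<longleftrightarrow> (x = u \<and> v \<in> set q) \<or> precedes q u v"
proof -
  have "precedes (x # q) u v \<longleftrightarrow> (\<exists>j<length q. x = u \<and> q ! j = v) \<or> precedes q u v"
    unfolding precedes_def
  proof
    assume "\<exists>i j. i < j \<and> j < length (x # q) \<and> (x # q) ! i = u \<and> (x # q) ! j = v"
    then obtain i j where "i < j" "j < length (x # q)" "(x # q) ! i = u" "(x # q) ! j = v"
      by blast
    then show "(\<exists>j<length q. x = u \<and> q ! j = v) \<or>
        (\<exists>i j. i < j \<and> j < length q \<and> q ! i = u \<and> q ! j = v)"
      by (cases i; cases j) auto
  next
    assume "(\<exists>j<length q. x = u \<and> q ! j = v) \<or>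
        (\<exists>i j. i < j \<and> j < length q \<and> q ! i = u \<and> q ! j = v)"
    then show "\<exists>i j. i < j \<and> j < length (x # q) \<and> (x # q) ! i = u \<and> (x # q) ! j = v"
    proof (elim disjE exE conjE)
      fix j assume "j < length q" "x = u" "q ! j = v"
      then show ?thesis by (intro exI[of _ 0] exI[of _ "Suc j"]) auto
    next
      fix i j assume "i < j" "j < length q" "q ! i = u" "q ! j = v"
      then show ?thesis by (intro exI[of _ "Suc i"] exI[of _ "Suc j"]) auto
    qed
  qed
  then show ?thesis by (auto simp: in_set_conv_nth)
qed

lemma precedes_append:
  "precedes (q @ r) u v \<longleftrightarrow> precedes q u v \<or> precedes r u v \<or> (u \<in> set q \<and> v \<in> set r)"
  by (induction q) (auto simp: precedes_Cons)

lemma precedes_imp_in_set: "precedes q u v \<Longrightarrow> u \<in> set q \<and> v \<in> set q"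
  by (induction q) (auto simp: precedes_Cons)

lemma precedes_filter: "P u \<Longrightarrow> P v \<Longrightarrow> precedes (filter P q) u v \<longleftrightarrow> precedes q u v"
  by (induction q) (auto simp: precedes_Cons)

lemma finite_precedes_pairs:
  "finite {(u, v). u \<in> S \<and> Y u \<and> v \<in> T \<and> \<not> Y v \<and> precedes q u v}"
  by (rule finite_subset[of _ "set q \<times> set q"]) (auto dest: precedes_imp_in_set)

lemma cnt_cong:
  assumes "\<And>u v. Y u \<Longrightarrow> \<not> Y v \<Longrightarrow>
    (u \<in> S \<and> v \<in> T \<and> precedes q u v) \<longleftrightarrow> (u \<in> S' \<and> v \<in> T' \<and> precedes q' u v)"
  shows "cnt Y S T q = cnt Y S' T' q'"
  unfolding cnt_def by (rule arg_cong[where f = card]) (use assms in blast)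

lemma cnt_append:
  assumes "set q \<inter> set r = {}"
  shows "cnt Y S T (q @ r) = cnt Y S T q + cnt Y S T r
     + card {u \<in> set q. u \<in> S \<and> Y u} * card {v \<in> set r. v \<in> T \<and> \<not> Y v}"
proof -
  let ?P = "\<lambda>q. {(u, v). u \<in> S \<and> Y u \<and> v \<in> T \<and> \<not> Y v \<and> precedes q u v}"
  let ?C = "{u \<in> set q. u \<in> S \<and> Y u} \<times> {v \<in> set r. v \<in> T \<and> \<not> Y v}"
  have "?P (q @ r) = (?P q \<union> ?P r) \<union> ?C"
    by (auto simp: precedes_append)
  moreover have "?P q \<inter> ?P r = {}" and "(?P q \<union> ?P r) \<inter> ?C = {}"
    using assms by (auto dest: precedes_imp_in_set)
  ultimately show ?thesis
    by (simp add: cnt_def card_Un_disjoint finite_precedes_pairs card_cartesian_product)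
qed

lemma cnt_Un_left:
  assumes "S1 \<inter> S2 = {}"
  shows "cnt Y (S1 \<union> S2) T q = cnt Y S1 T q + cnt Y S2 T q"
proof -
  let ?P = "\<lambda>S. {(u, v). u \<in> S \<and> Y u \<and> v \<in> T \<and> \<not> Y v \<and> precedes q u v}"
  have "?P (S1 \<union> S2) = ?P S1 \<union> ?P S2" and "?P S1 \<inter> ?P S2 = {}"
    using assms by auto
  then show ?thesis by (simp add: cnt_def card_Un_disjoint finite_precedes_pairs)
qed

lemma cnt_Un_right:
  assumes "T1 \<inter> T2 = {}"
  shows "cnt Y S (T1 \<union> T2) q = cnt Y S T1 q + cnt Y S T2 q"
proof -
  let ?P = "\<lambda>T. {(u, v). u \<in> S \<and> Y u \<and> v \<in> T \<and> \<not> Y v \<and> precedes q u v}"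
  have "?P (T1 \<union> T2) = ?P T1 \<union> ?P T2" and "?P T1 \<inter> ?P T2 = {}"
    using assms by auto
  then show ?thesis by (simp add: cnt_def card_Un_disjoint finite_precedes_pairs)
qed

lemma cnt_filter:
  assumes "\<And>x. x \<in> S \<union> T \<Longrightarrow> P x"
  shows "cnt Y S T (filter P q) = cnt Y S T q"
  by (rule cnt_cong) (use assms in \<open>auto simp: precedes_filter\<close>)

lemma cnt_shuffles_left:
  assumes "set xs \<inter> set ys = {}" and "zs \<in> shuffles xs ys"
  shows "cnt Y (set xs) (set xs) zs = cnt Y (set xs) (set xs) xs"
  using cnt_filter[of "set xs" "set xs" "\<lambda>x. x \<in> set xs" Y zs]
    filter_shuffles_disjoint1(1)[OF assms] by simp

lemma cnt_shuffles_right: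
  assumes "set xs \<inter> set ys = {}" and "zs \<in> shuffles xs ys"
  shows "cnt Y (set ys) (set ys) zs = cnt Y (set ys) (set ys) ys"
  using cnt_shuffles_left[of ys xs zs Y] assms by (simp add: shuffles_commutes Int_commute)

lemma nth_notin_set_take: "distinct xs \<Longrightarrow> i < length xs \<Longrightarrow> xs ! i \<notin> set (take i xs)"
  using distinct_take[of xs "Suc i"] by (simp add: take_Suc_conv_app_nth)

lemma snoc_in_shuffles_leftI: "zs \<in> shuffles xs ys \<Longrightarrow> zs @ [z] \<in> shuffles (xs @ [z]) ys"
proof (induction zs arbitrary: xs ys)
  case (Cons a zs)
  then consider "xs \<noteq> []" "hd xs = a" "zs \<in> shuffles (tl xs) ys"
    | "ys \<noteq> []" "hd ys = a" "zs \<in> shuffles xs (tl ys)"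
    by (auto simp: Cons_in_shuffles_iff)
  then show ?case
  proof cases
    case 1
    then show ?thesis using Cons.IH by (metis Cons_in_shuffles_leftI append_Cons list.collapse)
  next
    case 2
    then show ?thesis using Cons.IH by (metis Cons_in_shuffles_rightI append_Cons list.collapse)
  qed
qed simp

lemma snoc_in_shuffles_rightI: "zs \<in> shuffles xs ys \<Longrightarrow> zs @ [z] \<in> shuffles xs (ys @ [z])"
  using snoc_in_shuffles_leftI[of zs ys xs z] by (simp add: shuffles_commutes)

lemma snoc_in_shufflesD:
  "zs @ [z] \<in> shuffles xs ys \<Longrightarrow>
    (\<exists>xs'. xs = xs' @ [z] \<and> zs \<in> shuffles xs' ys) \<or> (\<exists>ys'. ys = ys' @ [z] \<and> zs \<in> shuffles xs ys')"
proof (induction zs arbitrary: xs ys)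
  case Nil
  then show ?case by (cases xs; cases ys) (auto simp: Cons_in_shuffles_iff)
next
  case (Cons a zs)
  then consider "xs = a # tl xs" "zs @ [z] \<in> shuffles (tl xs) ys"
    | "ys = a # tl ys" "zs @ [z] \<in> shuffles xs (tl ys)"
    by (auto simp: Cons_in_shuffles_iff)
  then show ?case
  proof cases
    case 1
    then show ?thesis using Cons.IH[of "tl xs" ys]
      by (metis Cons_in_shuffles_leftI append_Cons)
  next
    case 2
    then show ?thesis using Cons.IH[of xs "tl ys"]
      by (metis Cons_in_shuffles_rightI append_Cons)
  qed
qed

lemma shuffles_snoc_snoc:
  "shuffles (xs @ [x]) (ys @ [y]) =
    (\<lambda>zs. zs @ [x]) ` shuffles xs (ys @ [y]) \<union> (\<lambda>zs. zs @ [y]) ` shuffles (xs @ [x]) ys"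
proof (intro equalityI subsetI)
  fix zs assume zs: "zs \<in> shuffles (xs @ [x]) (ys @ [y])"
  then have "zs = butlast zs @ [last zs]" by (cases zs rule: rev_cases) auto
  then show "zs \<in> (\<lambda>zs. zs @ [x]) ` shuffles xs (ys @ [y]) \<union> (\<lambda>zs. zs @ [y]) ` shuffles (xs @ [x]) ys"
    using snoc_in_shufflesD[of "butlast zs" "last zs" "xs @ [x]" "ys @ [y]"] zs by auto
qed (auto intro: snoc_in_shuffles_leftI snoc_in_shuffles_rightI)

lemma is_arg_max_Un:
  fixes f :: "'a \<Rightarrow> 'b :: linorder"
  assumes "is_arg_max f (\<lambda>x. x \<in> A) a" and "is_arg_max f (\<lambda>x. x \<in> B) b"
  shows "is_arg_max f (\<lambda>x. x \<in> A \<union> B) (if f b < f a then a else b)"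
  using assms by (auto simp: is_arg_max_linorder)

definition cross_cnt :: "('a \<Rightarrow> bool) \<Rightarrow> 'a set \<Rightarrow> 'a set \<Rightarrow> 'a list \<Rightarrow> nat" where
  "cross_cnt Y A B q = cnt Y A B q + cnt Y B A q"

lemma cnt_Un_Un_shuffles:
  assumes "set xs \<inter> set ys = {}" and "zs \<in> shuffles xs ys"
  shows "cnt Y (set xs \<union> set ys) (set xs \<union> set ys) zs
    = cross_cnt Y (set xs) (set ys) zs + cnt Y (set xs) (set xs) xs + cnt Y (set ys) (set ys) ys"
  unfolding cnt_Un_left[OF assms(1)] cnt_Un_right[OF assms(1)] cross_cnt_def
    cnt_shuffles_left[OF assms] cnt_shuffles_right[OF assms] by simp

lemma cross_cnt_snoc_mono:
  assumes "set q = set r" and "x \<notin> set r" and "cross_cnt Y A B q \<le> cross_cnt Y A B r"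
  shows "cross_cnt Y A B (q @ [x]) \<le> cross_cnt Y A B (r @ [x])"
proof -
  have "set q \<inter> set [x] = {}" "set r \<inter> set [x] = {}" using assms(1,2) by auto
  then show ?thesis using assms(1,3) by (simp add: cross_cnt_def cnt_append)
qed

lemma is_arg_max_cross_cnt_snoc:
  assumes "is_arg_max (cross_cnt Y A B) (\<lambda>q. q \<in> S) r"
    and "\<And>q. q \<in> S \<Longrightarrow> set q = set r" and "x \<notin> set r"
  shows "is_arg_max (cross_cnt Y A B) (\<lambda>q. q \<in> (\<lambda>q. q @ [x]) ` S) (r @ [x])"
proof -
  have r: "r \<in> S" and max: "\<And>q. q \<in> S \<Longrightarrow> cross_cnt Y A B q \<le> cross_cnt Y A B r"
    using assms(1) by (auto simp: is_arg_max_linorder)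
  have "cross_cnt Y A B (q @ [x]) \<le> cross_cnt Y A B (r @ [x])" if "q \<in> S" for q
    using cross_cnt_snoc_mono[OF assms(2) assms(3) max] that by simp
  then show ?thesis using r by (auto simp: is_arg_max_linorder)
qed

lemma cnt_append_remaining:
  assumes "distinct ys" and "set xs \<inter> set ys = {}" and "set q = set (take i xs) \<union> set (take j ys)"
  shows "cnt Y (set (take i xs)) (set ys) (q @ drop j ys) = cnt Y (set xs) (set ys) q
    + card {u \<in> set (take i xs). Y u} * card {v \<in> set (drop j ys). \<not> Y v}"
proof -
  have "set q \<inter> set (drop j ys) = {}"
    using assms set_take_disj_set_drop_if_distinct[OF assms(1), of j j]
    by (auto dest: in_set_takeD in_set_dropD)
  moreover have "cnt Y (set (take i xs)) (set ys) (drop j ys) = 0"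
  proof -
    have "{(u, v). u \<in> set (take i xs) \<and> Y u \<and> v \<in> set ys \<and> \<not> Y v
        \<and> precedes (drop j ys) u v} = {}"
      using assms(2) by (auto dest!: precedes_imp_in_set in_set_takeD in_set_dropD)
    then show ?thesis unfolding cnt_def by (metis card.empty)
  qed
  moreover have "cnt Y (set (take i xs)) (set ys) q = cnt Y (set xs) (set ys) q"
    by (rule cnt_cong) (use assms(2,3) in \<open>auto dest: precedes_imp_in_set in_set_takeD\<close>)
  moreover have "{u \<in> set q. u \<in> set (take i xs) \<and> Y u} = {u \<in> set (take i xs). Y u}"
    and "{v \<in> set (drop j ys). v \<in> set ys \<and> \<not> Y v} = {v \<in> set (drop j ys). \<not> Y v}"
    using assms(3) by (auto dest: in_set_dropD)
  ultimately show ?thesis by (simp add: cnt_append)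
qed

lemma Ghat_zero_eq:
  assumes "0 < npos Y pa" "0 < nneg Y pa" "0 < npos Y pb" "0 < nneg Y pb"
  shows "Ghat 0 Y pa pb i j q =
    real (cnt Y (set (take i pa)) (set pb) (q @ drop j pb)
      + cnt Y (set (take j pb)) (set pa) (q @ drop i pa))
    / real ((nneg Y pa + nneg Y pb) * (npos Y pa + npos Y pb))"
proof -
  have cancel: "a * b / k * (x / (a * b)) = x / k" if "a * b \<noteq> 0" for a b k x :: real
    using that by simp
  show ?thesis
    using assms cancel[of "real (npos Y pa)" "real (nneg Y pb)"]
      cancel[of "real (nneg Y pa)" "real (npos Y pb)"]
    unfolding Ghat_def Apart_def Bpart_def Let_def of_nat_mult of_nat_add
      mult.commute[of "real (npos Y pb)" "real (nneg Y pa)"]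
    by (simp add: add_divide_distrib)
qed

context
  fixes pa pb :: "'a list" and Y :: "'a \<Rightarrow> bool"
  assumes distinct: "distinct pa" "distinct pb" and disjoint: "set pa \<inter> set pb = {}"
    and pos: "0 < npos Y pa" "0 < nneg Y pa" "0 < npos Y pb" "0 < nneg Y pb"
begin

lemma Ghat_zero_less_iff:
  assumes q: "set q = set (take i pa) \<union> set (take j pb)"
    and q': "set q' = set (take i pa) \<union> set (take j pb)"
  shows "Ghat 0 Y pa pb i j q < Ghat 0 Y pa pb i j q'
    \<longleftrightarrow> cross_cnt Y (set pa) (set pb) q < cross_cnt Y (set pa) (set pb) q'"
proof -
  have disjoint': "set pb \<inter> set pa = {}" using disjoint by auto
  have qb: "set q = set (take j pb) \<union> set (take i pa)"
    and qb': "set q' = set (take j pb) \<union> set (take i pa)" using q q' by auto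
  define k where "k = real ((nneg Y pa + nneg Y pb) * (npos Y pa + npos Y pb))"
  have "0 < k" unfolding k_def using pos by simp
  then show ?thesis
    unfolding Ghat_zero_eq[OF pos] k_def[symmetric] cross_cnt_def
      cnt_append_remaining[OF distinct(2) disjoint q] cnt_append_remaining[OF distinct(2) disjoint q']
      cnt_append_remaining[OF distinct(1) disjoint' qb] cnt_append_remaining[OF distinct(1) disjoint' qb']
    by (simp only: divide_less_cancel of_nat_less_iff) auto
qed

lemma xO_zero_is_arg_max:
  "i \<le> length pa \<Longrightarrow> j \<le> length pb \<Longrightarrow>
    is_arg_max (cross_cnt Y (set pa) (set pb)) (\<lambda>q. q \<in> shuffles (take i pa) (take j pb))
      (xO 0 Y pa pb i j)"
proof (induction i arbitrary: j)
  case 0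
  then show ?case by (simp add: is_arg_max_linorder)
next
  case (Suc i)
  note outer = Suc.IH
  show ?case using Suc.prems
  proof (induction j)
    case 0
    then show ?case by (simp add: is_arg_max_linorder)
  next
    case (Suc j)
    let ?f = "cross_cnt Y (set pa) (set pb)"
    let ?Sa = "shuffles (take i pa) (take (Suc j) pb)" and ?Sb = "shuffles (take (Suc i) pa) (take j pb)"
    let ?ra = "xO 0 Y pa pb i (Suc j)" and ?rb = "xO 0 Y pa pb (Suc i) j"
    let ?qa = "?ra @ [pa ! i]" and ?qb = "?rb @ [pb ! j]"
    have i: "i < length pa" and j: "j < length pb" using Suc.prems by auto
    have take_a: "take (Suc i) pa = take i pa @ [pa ! i]" and take_b: "take (Suc j) pb = take j pb @ [pb ! j]"
      using i j by (simp_all add: take_Suc_conv_app_nth)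
    have ra: "is_arg_max ?f (\<lambda>q. q \<in> ?Sa) ?ra" using outer Suc.prems by simp
    have rb: "is_arg_max ?f (\<lambda>q. q \<in> ?Sb) ?rb" using Suc.IH Suc.prems by simp
    have ra_mem: "?ra \<in> ?Sa" and rb_mem: "?rb \<in> ?Sb"
      using ra rb by (simp_all add: is_arg_max_def)
    have set_ra: "set ?ra = set (take i pa) \<union> set (take (Suc j) pb)"
      and set_rb: "set ?rb = set (take (Suc i) pa) \<union> set (take j pb)"
      using ra_mem rb_mem by (simp_all add: set_shuffles)
    have "pa ! i \<notin> set ?ra" and "pb ! j \<notin> set ?rb"
      unfolding set_ra set_rb
      using nth_notin_set_take[OF distinct(1) i] nth_notin_set_take[OF distinct(2) j]
        nth_mem[OF i] nth_mem[OF j] disjoint by (auto dest: in_set_takeD)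
    then have qa: "is_arg_max ?f (\<lambda>q. q \<in> (\<lambda>q. q @ [pa ! i]) ` ?Sa) ?qa"
      and qb: "is_arg_max ?f (\<lambda>q. q \<in> (\<lambda>q. q @ [pb ! j]) ` ?Sb) ?qb"
      using is_arg_max_cross_cnt_snoc[OF ra] is_arg_max_cross_cnt_snoc[OF rb]
      by (simp_all add: set_ra set_rb set_shuffles)
    have "set ?qa = set (take (Suc i) pa) \<union> set (take (Suc j) pb)"
      and "set ?qb = set (take (Suc i) pa) \<union> set (take (Suc j) pb)"
      unfolding set_append set_ra set_rb take_a take_b by auto
    then have "xO 0 Y pa pb (Suc i) (Suc j) = (if ?f ?qb < ?f ?qa then ?qa else ?qb)"
      by (simp add: Let_def Ghat_zero_less_iff)
    then show ?case
      using is_arg_max_Un[OF qa qb] by (simp add: take_a take_b shuffles_snoc_snoc)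
  qed
qed

end

lemma AUC_mono_cross_cnt:
  assumes "set xs \<inter> set ys = {}" and "zs \<in> shuffles xs ys" and "zs' \<in> shuffles xs ys"
    and "cross_cnt Y (set xs) (set ys) zs \<le> cross_cnt Y (set xs) (set ys) zs'"
  shows "AUC Y xs ys zs \<le> AUC Y xs ys zs'"
  unfolding AUC_def cnt_Un_Un_shuffles[OF assms(1,2)] cnt_Un_Un_shuffles[OF assms(1,3)]
  using assms(4) by (intro divide_right_mono) simp_all

theorem theorem1:
  fixes pa pb :: "'a list" and Y :: "'a \<Rightarrow> bool"
  assumes "distinct pa" and "distinct pb" and "set pa \<inter> set pb = {}"
    and "npos Y pa \<ge> 1" and "nneg Y pa \<ge> 1" and "npos Y pb \<ge> 1" and "nneg Y pb \<ge> 1"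
  shows "xOrder 0 Y pa pb \<in> shuffles pa pb
    \<and> (\<forall>ord \<in> shuffles pa pb. AUC Y pa pb ord \<le> AUC Y pa pb (xOrder 0 Y pa pb)
                            \<and> J 0 Y pa pb ord \<le> J 0 Y pa pb (xOrder 0 Y pa pb))"
proof -
  have pos: "0 < npos Y pa" "0 < nneg Y pa" "0 < npos Y pb" "0 < nneg Y pb"
    using assms(4-7) by simp_all
  have "is_arg_max (cross_cnt Y (set pa) (set pb)) (\<lambda>q. q \<in> shuffles pa pb) (xOrder 0 Y pa pb)"
    using xO_zero_is_arg_max[OF assms(1-3) pos order.refl order.refl] by (simp add: xOrder_def)
  then have "xOrder 0 Y pa pb \<in> shuffles pa pb"
    and "\<forall>ord \<in> shuffles pa pb. AUC Y pa pb ord \<le> AUC Y pa pb (xOrder 0 Y pa pb)"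
    using AUC_mono_cross_cnt[OF assms(3)] by (auto simp: is_arg_max_linorder)
  then show ?thesis by (simp add: J_def)
qed

end
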